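(* Let $S=(P,L)$ be a slim dense near hexagon, let $Q_1,Q_2$ be two disjoint big quads of $S$, and let $Y$ be the subspace of $S$ generated by $Q_1\cup Q_2$. For $\{i,j\}=\{1,2\}$ and $x\in P\setminus Y$, let $x^{j}$ denote the unique point of $Q_j$ at distance $1$ from $x$, and for $y\in Q_i$ let $z_y$ denote the unique point of $Q_j$ at distance $1$ from $y$. Let $\ell$ be a line of $S$ disjoint from $Y$ and let $x,y\in\ell$ with $x\neq y$. Then the line $x^{1}y^{1}$ equals the line $x^{1}z_{x^{2}}$ if and only if the line $x^{2}y^{2}$ equals the line $x^{2}z_{x^{1}}$. Moreover, if $x^{1}y^{1}=x^{1}z_{x^{2}}$, then $(y^{1},y^{2})=(z_{x^{2}},\,x^{2}\ast z_{x^{1}})$ or $(y^1,y^2)=(x^{1}\ast z_{x^{2}},\,z_{x^{1}})$.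
   Context: A slim partial linear space has exactly $3$ points per line; for distinct collinear points $u,v$, $uv$ denotes the line through them and $u\ast v$ the third point of that line. $d$ is the distance in the collinearity graph. A near hexagon is a connected partial linear space of diameter $3$ with no point collinear with all others such that every point has a unique nearest point on every line. A quad is a convex subset of diameter $2$ in which no point is collinear with all others; the near hexagon is dense if any two points at distance $2$ lie in a quad. A quad $Q$ is big if every point of $S$ has distance at most $1$ from $Q$. A subspace is a set of points containing every line meeting it in at least two points; the subspace generated by a set is the intersection of all subspaces containing it. *)

theory Defs
  imports Main
begin

definition partial_linear_space :: "'a set \<Rightarrow> 'a set set \<Rightarrow> bool" where
  "partial_linear_space P L \<longleftrightarrow>
     (\<forall>l\<in>L. l \<subseteq> P \<and> finite l \<and> card l \<ge> 2) \<and>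
     (\<forall>l\<in>L. \<forall>m\<in>L. \<forall>u v. u \<noteq> v \<and> u \<in> l \<and> v \<in> l \<and> u \<in> m \<and> v \<in> m \<longrightarrow> l = m)"

definition slim_pls :: "'a set \<Rightarrow> 'a set set \<Rightarrow> bool" where
  "slim_pls P L \<longleftrightarrow> partial_linear_space P L \<and> (\<forall>l\<in>L. card l = 3)"

definition adj :: "'a set set \<Rightarrow> 'a \<Rightarrow> 'a \<Rightarrow> bool" where
  "adj L u v \<longleftrightarrow> u \<noteq> v \<and> (\<exists>l\<in>L. u \<in> l \<and> v \<in> l)"

definition dist :: "'a set set \<Rightarrow> 'a \<Rightarrow> 'a \<Rightarrow> nat" where
  "dist L u v = (LEAST n. (adj L ^^ n) u v)"

definition line_through :: "'a set set \<Rightarrow> 'a \<Rightarrow> 'a \<Rightarrow> 'a set" where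
  "line_through L u v = (THE l. l \<in> L \<and> u \<in> l \<and> v \<in> l)"

definition third :: "'a set set \<Rightarrow> 'a \<Rightarrow> 'a \<Rightarrow> 'a" where
  "third L u v = (THE w. w \<in> line_through L u v \<and> w \<noteq> u \<and> w \<noteq> v)"

definition near_hexagon :: "'a set \<Rightarrow> 'a set set \<Rightarrow> bool" where
  "near_hexagon P L \<longleftrightarrow>
     partial_linear_space P L \<and>
     (\<forall>x\<in>P. \<forall>y\<in>P. \<exists>n. (adj L ^^ n) x y) \<and>
     (\<forall>x\<in>P. \<forall>y\<in>P. dist L x y \<le> 3) \<and> (\<exists>x\<in>P. \<exists>y\<in>P. dist L x y = 3) \<and>
     \<not> (\<exists>x\<in>P. \<forall>y\<in>P. y \<noteq> x \<longrightarrow> adj L x y) \<and>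
     (\<forall>x\<in>P. \<forall>l\<in>L. \<exists>!y. y \<in> l \<and> (\<forall>z\<in>l. z \<noteq> y \<longrightarrow> dist L x y < dist L x z))"

definition convex :: "'a set \<Rightarrow> 'a set set \<Rightarrow> 'a set \<Rightarrow> bool" where
  "convex P L X \<longleftrightarrow> X \<subseteq> P \<and>
     (\<forall>x\<in>X. \<forall>y\<in>X. \<forall>z\<in>P. dist L x z + dist L z y = dist L x y \<longrightarrow> z \<in> X)"

definition quad :: "'a set \<Rightarrow> 'a set set \<Rightarrow> 'a set \<Rightarrow> bool" where
  "quad P L Q \<longleftrightarrow> convex P L Q \<and>
     (\<forall>x\<in>Q. \<forall>y\<in>Q. dist L x y \<le> 2) \<and> (\<exists>x\<in>Q. \<exists>y\<in>Q. dist L x y = 2) \<and>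
     \<not> (\<exists>x\<in>Q. \<forall>y\<in>Q. y \<noteq> x \<longrightarrow> adj L x y)"

definition dense :: "'a set \<Rightarrow> 'a set set \<Rightarrow> bool" where
  "dense P L \<longleftrightarrow> (\<forall>x\<in>P. \<forall>y\<in>P. dist L x y = 2 \<longrightarrow> (\<exists>Q. quad P L Q \<and> x \<in> Q \<and> y \<in> Q))"

definition big_quad :: "'a set \<Rightarrow> 'a set set \<Rightarrow> 'a set \<Rightarrow> bool" where
  "big_quad P L Q \<longleftrightarrow> quad P L Q \<and> (\<forall>x\<in>P. \<exists>y\<in>Q. dist L x y \<le> 1)"

definition subspace :: "'a set \<Rightarrow> 'a set set \<Rightarrow> 'a set \<Rightarrow> bool" where
  "subspace P L X \<longleftrightarrow> X \<subseteq> P \<and> (\<forall>l\<in>L. (\<exists>u v. u \<noteq> v \<and> u \<in> l \<inter> X \<and> v \<in> l \<inter> X) \<longrightarrow> l \<subseteq> X)"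

definition generated_subspace :: "'a set \<Rightarrow> 'a set set \<Rightarrow> 'a set \<Rightarrow> 'a set" where
  "generated_subspace P L A = \<Inter>{X. subspace P L X \<and> A \<subseteq> X}"

definition proj_pt :: "'a set set \<Rightarrow> 'a set \<Rightarrow> 'a \<Rightarrow> 'a" where
  "proj_pt L Q x = (THE p. p \<in> Q \<and> dist L x p = 1)"

end

theory Submission
  imports Defs
begin

text \<open>
  Write x1, y1, w1 and x2, y2, w2 for the neighbours in Q1 and Q2 of the three points x, y, w of l,
  and z p for the neighbour of p in the other quad. All these neighbours are gates: the neighbour
  of u in a quad Q is collinear with every point of Q at distance 2 from u. Consequently x1, y1, w1
  (and x2, y2, w2) form a line, and the line x1 y1 equals x1 (z x2) exactly when z x2 is y1 or w1.

  The heart of the proof is that z x2 = y1 forces z x1 = w2. If z x1 were y2, the gate of w1 in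
  Q2 would be collinear with x2 and y2, hence equal to w2, and w would be collinear with the two
  collinear points w1, w2 of Y. Otherwise density provides a quad through y and x2; it contains
  x, y1, x1 and z x1, so z x1 is at distance 2 from y and hence collinear with y2 as well as with
  x2, i.e. z x1 = w2. Applying this to both quads and to both orders of y, w gives the theorem.
\<close>

definition unique_neighbour :: "'a set set \<Rightarrow> 'a set \<Rightarrow> 'a \<Rightarrow> bool" where
  "unique_neighbour L Q p \<longleftrightarrow> (\<exists>!q\<in>Q. adj L p q)"

locale slim_near_hexagon =
  fixes P :: "'a set" and L :: "'a set set"
  assumes slim: "slim_pls P L" and near_hexagon: "near_hexagon P L"
begin

lemma line_subset: "m \<in> L \<Longrightarrow> m \<subseteq> P"
  using slim by (auto simp: slim_pls_def partial_linear_space_def)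

lemma line_unique:
  "\<lbrakk>m \<in> L; n \<in> L; u \<noteq> v; u \<in> m; v \<in> m; u \<in> n; v \<in> n\<rbrakk> \<Longrightarrow> m = n"
  using slim unfolding slim_pls_def partial_linear_space_def by blast

lemma line_points:
  assumes "m \<in> L"
  obtains u v s where "m = {u, v, s}" "u \<noteq> v" "u \<noteq> s" "v \<noteq> s"
proof -
  have "card m = 3" using slim assms by (auto simp: slim_pls_def)
  with that show ?thesis by (auto simp: card_3_iff)
qed

lemma line_eq_three_points:
  assumes "m \<in> L" "u \<in> m" "v \<in> m" "s \<in> m" "u \<noteq> v" "u \<noteq> s" "v \<noteq> s"
  shows "m = {u, v, s}"
  using assms by (elim line_points) auto

lemma line_third_point:
  assumes "m \<in> L" "u \<in> m" "v \<in> m" "u \<noteq> v"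
  obtains s where "s \<in> m" "s \<noteq> u" "s \<noteq> v"
  using assms by (elim line_points) auto

lemma line_through_eq: "\<lbrakk>m \<in> L; u \<noteq> v; u \<in> m; v \<in> m\<rbrakk> \<Longrightarrow> line_through L u v = m"
  unfolding line_through_def by (rule the_equality) (use line_unique in blast)+

lemma third_eq:
  assumes "m \<in> L" "u \<in> m" "v \<in> m" "s \<in> m" "u \<noteq> v" "u \<noteq> s" "v \<noteq> s"
  shows "third L u v = s"
  unfolding third_def line_through_eq[OF assms(1,5,2,3)] line_eq_three_points[OF assms]
  using assms(6,7) by auto

lemma adj_sym: "adj L u v \<Longrightarrow> adj L v u"
  by (auto simp: adj_def)

lemma adjD:
  assumes "adj L u v" shows "u \<in> P" "v \<in> P" "u \<noteq> v"
  using assms line_subset by (auto simp: adj_def)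

lemma adjI: "\<lbrakk>m \<in> L; u \<in> m; v \<in> m; u \<noteq> v\<rbrakk> \<Longrightarrow> adj L u v"
  by (auto simp: adj_def)

lemma adj_lineE:
  assumes "adj L u v" obtains m where "m \<in> L" "u \<in> m" "v \<in> m"
  using assms by (auto simp: adj_def)

lemma relpowp_adj_sym: "(adj L ^^ n) u v \<Longrightarrow> (adj L ^^ n) v u"
proof (induction n arbitrary: u v)
  case 0
  then show ?case by simp
next
  case (Suc n)
  then obtain z where "(adj L ^^ n) u z" "adj L z v" by (auto elim: relpowp_Suc_E)
  with Suc.IH show ?case by (metis adj_sym relpowp_Suc_I2)
qed

lemma dist_relpowp: "\<lbrakk>u \<in> P; v \<in> P\<rbrakk> \<Longrightarrow> (adj L ^^ dist L u v) u v"
  unfolding dist_def by (rule LeastI_ex) (use near_hexagon in \<open>auto simp: near_hexagon_def\<close>)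

lemma dist_le_relpowp: "(adj L ^^ n) u v \<Longrightarrow> dist L u v \<le> n"
  unfolding dist_def by (rule Least_le)

lemma dist_eq_0_iff: "\<lbrakk>u \<in> P; v \<in> P\<rbrakk> \<Longrightarrow> dist L u v = 0 \<longleftrightarrow> u = v"
  using dist_relpowp[of u v] dist_le_relpowp[of 0 u v] by auto

lemma dist_eq_1_iff: "\<lbrakk>u \<in> P; v \<in> P\<rbrakk> \<Longrightarrow> dist L u v = 1 \<longleftrightarrow> adj L u v"
  using dist_relpowp[of u v] dist_le_relpowp[of 1 u v] dist_eq_0_iff[of u v] adjD(3)
  by (fastforce simp: le_Suc_eq)

lemma dist_adj: "adj L u v \<Longrightarrow> dist L u v = 1"
  using dist_eq_1_iff adjD by blast

lemma dist_commute: "\<lbrakk>u \<in> P; v \<in> P\<rbrakk> \<Longrightarrow> dist L u v = dist L v u"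
  by (metis antisym dist_le_relpowp dist_relpowp relpowp_adj_sym)

lemma dist_triangle: "\<lbrakk>u \<in> P; v \<in> P; w \<in> P\<rbrakk> \<Longrightarrow> dist L u w \<le> dist L u v + dist L v w"
  by (metis dist_le_relpowp dist_relpowp relpowp_trans)

lemma dist_ge_2: "\<lbrakk>u \<in> P; v \<in> P; u \<noteq> v; \<not> adj L u v\<rbrakk> \<Longrightarrow> dist L u v \<ge> 2"
  using dist_eq_0_iff dist_eq_1_iff by fastforce

lemma adj_if_dist_le_1: "\<lbrakk>u \<in> P; v \<in> P; u \<noteq> v; dist L u v \<le> 1\<rbrakk> \<Longrightarrow> adj L u v"
  using dist_eq_0_iff dist_eq_1_iff by (simp add: le_Suc_eq)

lemma dist_eq_2I:
  assumes "u \<noteq> v" "\<not> adj L u v" "adj L u z" "adj L z v"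
  shows "dist L u v = 2"
proof -
  have P: "u \<in> P" "v \<in> P" "z \<in> P" using assms adjD by auto
  have "dist L u v \<le> 2" using dist_triangle[OF P(1,3,2)] dist_adj assms by simp
  with dist_ge_2[OF P(1,2) assms(1,2)] show ?thesis by simp
qed

lemma nearest_point_on_line:
  assumes "x \<in> P" "m \<in> L"
  obtains p where "p \<in> m" "\<And>z. z \<in> m \<Longrightarrow> z \<noteq> p \<Longrightarrow> dist L x p < dist L x z"
proof -
  have "\<exists>!p. p \<in> m \<and> (\<forall>z\<in>m. z \<noteq> p \<longrightarrow> dist L x p < dist L x z)"
    using near_hexagon assms unfolding near_hexagon_def by (elim conjE) (rule bspec, rule bspec)
  with that show ?thesis by blast
qed

lemma in_line_if_adj_two_points:
  assumes "m \<in> L" "u \<in> m" "v \<in> m" "u \<noteq> v" "adj L x u" "adj L x v"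
  shows "x \<in> m"
proof -
  have x: "x \<in> P" using adjD assms(5) by blast
  obtain p where p: "p \<in> m" "\<And>z. z \<in> m \<Longrightarrow> z \<noteq> p \<Longrightarrow> dist L x p < dist L x z"
    using nearest_point_on_line[OF x assms(1)] by blast
  have "dist L x u = 1" "dist L x v = 1" using dist_adj assms(5,6) by auto
  then have "dist L x p < 1" using p(2)[of u] p(2)[of v] assms(2-4) by (cases "p = u") auto
  then show ?thesis using dist_eq_0_iff[OF x] p(1) line_subset assms(1) by blast
qed

lemma dist_third_point_le_1:
  assumes "x \<in> P" "m \<in> L" "u \<in> m" "v \<in> m" "s \<in> m" "u \<noteq> v" "u \<noteq> s" "v \<noteq> s"
    and "dist L x u = 2" "dist L x v = 2"
  shows "dist L x s \<le> 1"
proof -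
  obtain p where p: "p \<in> m" "\<And>z. z \<in> m \<Longrightarrow> z \<noteq> p \<Longrightarrow> dist L x p < dist L x z"
    using nearest_point_on_line[OF assms(1,2)] by blast
  have "m = {u, v, s}" using line_eq_three_points assms(2-8) by blast
  then have "p = s" using p(2)[of u] p(2)[of v] p(1) assms(3,4,6,9,10) by auto
  then show ?thesis using p(2)[of u] assms(3,7,9) by auto
qed

lemma adj_third_point:
  assumes "m \<in> L" "u \<in> m" "v \<in> m" "s \<in> m" "u \<noteq> v" "u \<noteq> s" "v \<noteq> s"
    and "dist L x u = 2" "dist L x v = 2" "x \<noteq> s" "x \<in> P"
  shows "adj L x s"
proof -
  have "dist L x s \<le> 1" using dist_third_point_le_1 assms by blast
  moreover have "s \<in> P" using line_subset assms(1,4) by blast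
  ultimately show ?thesis using adj_if_dist_le_1 assms(10,11) by blast
qed

lemma subspace_line_subset:
  "\<lbrakk>subspace P L Y; m \<in> L; u \<noteq> v; u \<in> m; v \<in> m; u \<in> Y; v \<in> Y\<rbrakk> \<Longrightarrow> m \<subseteq> Y"
  unfolding subspace_def by blast

lemma in_subspace_if_adj_two_points:
  assumes "subspace P L Y" "adj L u v" "u \<in> Y" "v \<in> Y" "adj L x u" "adj L x v"
  shows "x \<in> Y"
proof -
  obtain m where m: "m \<in> L" "u \<in> m" "v \<in> m" using adj_lineE[OF assms(2)] .
  have "x \<in> m" using in_line_if_adj_two_points m adjD(3)[OF assms(2)] assms(5,6) by blast
  moreover have "m \<subseteq> Y" using subspace_line_subset assms(1,3,4) m adjD(3)[OF assms(2)] by blast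
  ultimately show ?thesis by blast
qed

lemma subspace_generated_subspace:
  assumes "A \<subseteq> P" shows "subspace P L (generated_subspace P L A)"
  unfolding subspace_def
proof (intro conjI ballI impI)
  have "subspace P L P" using line_subset by (auto simp: subspace_def)
  with assms show "generated_subspace P L A \<subseteq> P" by (auto simp: generated_subspace_def)
next
  fix m assume m: "m \<in> L"
    and "\<exists>u v. u \<noteq> v \<and> u \<in> m \<inter> generated_subspace P L A \<and> v \<in> m \<inter> generated_subspace P L A"
  then obtain u v where uv: "u \<noteq> v" "u \<in> m" "v \<in> m"
    and "u \<in> generated_subspace P L A" "v \<in> generated_subspace P L A" by blast
  then have "m \<subseteq> X" if "subspace P L X" "A \<subseteq> X" for X
    using that m subspace_line_subset unfolding generated_subspace_def by blast
  then show "m \<subseteq> generated_subspace P L A" unfolding generated_subspace_def by blast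
qed

lemma dist_eq_2_if_adj_outside_subspace:
  assumes "subspace P L Y" "x \<notin> Y" "u \<in> Y" "v \<in> Y" "u \<noteq> v" "adj L x u" "adj L x v"
  shows "dist L u v = 2"
proof (rule dist_eq_2I)
  show "\<not> adj L u v" using in_subspace_if_adj_two_points assms by blast
  show "adj L u x" using adj_sym assms(6) .
qed (use assms(5,7) in simp_all)

subsection \<open>Quads\<close>

lemma quad_subset: "quad P L Q \<Longrightarrow> Q \<subseteq> P"
  by (simp add: quad_def convex_def)

lemma quad_dist_le_2: "\<lbrakk>quad P L Q; u \<in> Q; v \<in> Q\<rbrakk> \<Longrightarrow> dist L u v \<le> 2"
  by (simp add: quad_def)

lemma quad_convex:
  assumes "quad P L Q" "u \<in> Q" "v \<in> Q" "dist L u v = 2" "adj L u z" "adj L z v"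
  shows "z \<in> Q"
proof -
  have "dist L u z + dist L z v = dist L u v" using dist_adj assms(4-6) by simp
  with assms(1-3) adjD(1)[OF assms(6)] show ?thesis unfolding quad_def convex_def by blast
qed

lemma quad_not_adj_point:
  "\<lbrakk>quad P L Q; p \<in> Q\<rbrakk> \<Longrightarrow> \<exists>z\<in>Q. z \<noteq> p \<and> \<not> adj L p z"
  unfolding quad_def by blast

lemma quad_adj_if_common_neighbour:
  assumes "quad P L Q" "q \<in> Q" "q' \<in> Q" "q \<noteq> q'" "p \<notin> Q" "adj L p q" "adj L p q'"
  shows "adj L q q'"
proof (rule ccontr)
  assume "\<not> adj L q q'"
  then have "dist L q q' = 2" using dist_eq_2I assms(4,6,7) adj_sym by metis
  then have "p \<in> Q" using quad_convex[OF assms(1-3)] assms(6,7) adj_sym by blast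
  with assms(5) show False ..
qed

lemma big_quad_neighbour:
  assumes "big_quad P L Q" "p \<in> P" "p \<notin> Q"
  obtains q where "q \<in> Q" "adj L p q"
proof -
  have Q: "quad P L Q" "\<forall>x\<in>P. \<exists>y\<in>Q. dist L x y \<le> 1"
    using assms(1) unfolding big_quad_def by simp_all
  obtain q where q: "q \<in> Q" "dist L p q \<le> 1" using Q(2) assms(2) by blast
  have "q \<in> P" using q(1) quad_subset[OF Q(1)] by blast
  then have "adj L p q" using adj_if_dist_le_1 q assms(2,3) by blast
  with q(1) show ?thesis by (rule that)
qed

subsection \<open>Gates\<close>

lemma unique_neighbour_proj_pt:
  assumes "Q \<subseteq> P" "unique_neighbour L Q p"
  shows "proj_pt L Q p \<in> Q" "adj L p (proj_pt L Q p)"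
    and "\<And>q. q \<in> Q \<Longrightarrow> adj L p q \<Longrightarrow> q = proj_pt L Q p"
proof -
  obtain q where q: "q \<in> Q \<and> adj L p q" and uniq: "\<forall>q'. q' \<in> Q \<and> adj L p q' \<longrightarrow> q' = q"
    using assms(2) unfolding unique_neighbour_def by (elim ex1E) blast
  have p: "p \<in> P" using q adjD(1) by blast
  have "proj_pt L Q p = q"
    unfolding proj_pt_def
  proof (rule the_equality)
    show "q \<in> Q \<and> dist L p q = 1" using q dist_adj by simp
    fix q' assume q': "q' \<in> Q \<and> dist L p q' = 1"
    then have "adj L p q'" using dist_eq_1_iff[OF p] assms(1) by blast
    with q' uniq show "q' = q" by blast
  qed
  with q uniq show "proj_pt L Q p \<in> Q" "adj L p (proj_pt L Q p)"
    and "\<And>q'. q' \<in> Q \<Longrightarrow> adj L p q' \<Longrightarrow> q' = proj_pt L Q p" by blast+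
qed

lemma unique_neighbour_outside_subspace:
  assumes "big_quad P L A" "subspace P L Y" "A \<subseteq> Y" "p \<in> P" "p \<notin> Y"
  shows "unique_neighbour L A p"
proof -
  have A: "quad P L A" using assms(1) by (simp add: big_quad_def)
  obtain q where q: "q \<in> A" "adj L p q" using big_quad_neighbour assms by blast
  have "q' = q" if "q' \<in> A" "adj L p q'" for q'
  proof (rule ccontr)
    assume "q' \<noteq> q"
    then have "adj L q q'" using quad_adj_if_common_neighbour[OF A q(1) that(1)] q(2) that(2) assms(3,5)
      by blast
    then have "p \<in> Y" using in_subspace_if_adj_two_points[OF assms(2)] q that assms(3) by blast
    with assms(5) show False ..
  qed
  with q show ?thesis unfolding unique_neighbour_def by blast
qed

lemma dist_le_1_to_two_points_of_line:
  assumes A: "quad P L A" and m: "m \<in> L" "q \<in> m" "q' \<in> m" "p \<in> m" "q \<noteq> q'"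
    and "q \<in> A" "q' \<in> A" "p \<notin> A" "s \<in> A"
  shows "dist L s q \<le> 1 \<or> dist L s q' \<le> 1"
proof (rule ccontr)
  assume "\<not> ?thesis"
  moreover have "dist L s q \<le> 2" "dist L s q' \<le> 2" using quad_dist_le_2[OF A] assms(7,8,10) by auto
  ultimately have far: "dist L s q = 2" "dist L s q' = 2" by auto
  have s: "s \<in> P" using assms(10) quad_subset[OF A] by blast
  have "adj L s p" using adj_third_point[OF m(1-4) _ _ _ far _ s] m(5) assms(7-10) by blast
  moreover have "dist L q s = 2" using far dist_commute s quad_subset[OF A] assms(7) by auto
  ultimately have "p \<in> A" using quad_convex[OF A assms(7,10)] adjI m assms(7,9) adj_sym by blast
  with assms(9) show False ..
qed

lemma unique_neighbour_disjoint_big_quad: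
  assumes bA: "big_quad P L A" and bB: "big_quad P L B" and disj: "A \<inter> B = {}" and p: "p \<in> B"
  shows "unique_neighbour L A p"
proof -
  have A: "quad P L A" and B: "quad P L B" using bA bB by (simp_all add: big_quad_def)
  have pP: "p \<in> P" and pA: "p \<notin> A" using p disj quad_subset[OF B] by auto
  obtain q where q: "q \<in> A" "adj L p q" using big_quad_neighbour[OF bA pP pA] by blast
  have "q' = q" if q': "q' \<in> A" "adj L p q'" for q'
  proof (rule ccontr)
    assume ne: "q' \<noteq> q"
    have "adj L q q'" using quad_adj_if_common_neighbour[OF A q(1) q'(1) ne[symmetric] pA q(2) q'(2)] .
    then obtain m where m: "m \<in> L" "q \<in> m" "q' \<in> m" by (rule adj_lineE)
    have pm: "p \<in> m" using in_line_if_adj_two_points[OF m ne[symmetric] q(2) q'(2)] .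
    obtain z where z: "z \<in> B" "z \<noteq> p" "\<not> adj L p z" using quad_not_adj_point[OF B p] by blast
    have zP: "z \<in> P" using z(1) quad_subset[OF B] by blast
    have "dist L p z = 2"
      using dist_ge_2[OF pP zP z(2)[symmetric] z(3)] quad_dist_le_2[OF B p z(1)] by simp
    then have zp: "dist L z p = 2" using dist_commute[OF pP zP] by simp
    have not_adj: "\<not> adj L z r" if "r \<in> A" "adj L p r" for r
      using quad_convex[OF B p z(1) \<open>dist L p z = 2\<close> that(2)] adj_sym that(1) disj by blast
    obtain s where s: "s \<in> A" "adj L z s" using big_quad_neighbour[OF bA zP] z(1) disj by blast
    have sP: "s \<in> P" using s(1) quad_subset[OF A] by blast
    obtain r r' where r: "r \<in> A" "r' \<in> A" "adj L p r" "adj L p r'" "r \<in> m" "r' \<in> m" "r \<noteq> r'"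
      and sr: "dist L s r \<le> 1"
      using dist_le_1_to_two_points_of_line[OF A m pm ne[symmetric] q(1) q'(1) pA s(1)] q q' m ne by blast
    have rP: "r \<in> P" using r(1) quad_subset[OF A] by blast
    have "dist L z r \<le> 2"
      using dist_triangle[OF zP sP rP] dist_adj[OF s(2)] sr by simp
    moreover have "z \<noteq> r" using z(1) r(1) disj by blast
    ultimately have "dist L z r = 2" using dist_ge_2[OF zP rP] not_adj r(1,3) by fastforce
    moreover have "p \<noteq> r" "p \<noteq> r'" "z \<noteq> r'" using pA z(1) r(1,2) disj by auto
    ultimately have "adj L z r'" using adj_third_point[OF m(1) r(5) pm r(6)] r(7) zp zP by blast
    then show False using not_adj r(2,4) by blast
  qed
  with q show ?thesis unfolding unique_neighbour_def by blast
qed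

lemma adj_proj_pt_if_dist_2:
  assumes Q: "quad P L Q" and u: "unique_neighbour L Q u" and v: "v \<in> Q" "dist L u v = 2"
  shows "adj L (proj_pt L Q u) v"
proof (rule ccontr)
  define a where "a = proj_pt L Q u"
  have a: "a \<in> Q" "adj L u a" and uniq: "\<And>q. q \<in> Q \<Longrightarrow> adj L u q \<Longrightarrow> q = a"
    using unique_neighbour_proj_pt[OF quad_subset[OF Q] u] unfolding a_def by blast+
  assume "\<not> adj L a v"
  have P: "u \<in> P" "a \<in> P" "v \<in> P" using adjD[OF a(2)] v(1) quad_subset[OF Q] by auto
  have "a \<noteq> v" using dist_adj[OF a(2)] v(2) by auto
  then have av: "dist L a v = 2"
    using dist_ge_2[OF P(2,3) _ \<open>\<not> adj L a v\<close>] quad_dist_le_2[OF Q a(1) v(1)] by simp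
  obtain m where m: "m \<in> L" "u \<in> m" "a \<in> m" using adj_lineE[OF a(2)] .
  obtain s where s: "s \<in> m" "s \<noteq> u" "s \<noteq> a" using line_third_point m adjD(3)[OF a(2)] by blast
  have "v \<noteq> s"
  proof
    assume "v = s"
    then have "adj L u v" using adjI[OF m(1,2) s(1)] s(2) by simp
    with v(2) show False using dist_adj by simp
  qed
  moreover have "dist L v u = 2" "dist L v a = 2" using v(2) av dist_commute P by auto
  ultimately have "adj L v s"
    using adj_third_point[OF m s(1) adjD(3)[OF a(2)]] s(2,3) P(3) by metis
  then have "s \<in> Q" using quad_convex[OF Q a(1) v(1) av] adjI[OF m(1,3) s(1)] s(3) adj_sym by metis
  moreover have "adj L u s" using adjI[OF m(1,2) s(1)] s(2) by simp
  ultimately show False using uniq s(3) by blast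
qed

lemma adj_proj_pt_line_outside_subspace:
  assumes A: "big_quad P L A" and Y: "subspace P L Y" "A \<subseteq> Y" and l: "l \<in> L" "l \<inter> Y = {}"
    and xy: "x \<in> l" "y \<in> l" "x \<noteq> y"
  shows "adj L (proj_pt L A x) (proj_pt L A y)"
proof -
  have qA: "quad P L A" using A by (simp add: big_quad_def)
  have PY: "x \<in> P" "y \<in> P" "x \<notin> Y" "y \<notin> Y" using xy l line_subset by auto
  have ux: "unique_neighbour L A x" and uy: "unique_neighbour L A y"
    using unique_neighbour_outside_subspace[OF A Y] PY by auto
  define x1 y1 where "x1 = proj_pt L A x" and "y1 = proj_pt L A y"
  have x1: "x1 \<in> A" "adj L x x1" and y1: "y1 \<in> A" "adj L y y1"
    and y_uniq: "\<And>q. q \<in> A \<Longrightarrow> adj L y q \<Longrightarrow> q = y1"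
    using unique_neighbour_proj_pt[OF quad_subset[OF qA]] ux uy unfolding x1_def y1_def by blast+
  have "x1 \<noteq> y1"
  proof
    assume "x1 = y1"
    then have "x1 \<in> l" using in_line_if_adj_two_points[OF l(1) xy] x1(2) y1(2) adj_sym by metis
    with l(2) x1(1) Y(2) show False by blast
  qed
  then have "\<not> adj L y x1" using y_uniq x1(1) by blast
  moreover have "y \<noteq> x1" using PY(4) x1(1) Y(2) by blast
  ultimately have "dist L y x1 = 2" using dist_eq_2I adjI[OF l(1) xy(2,1)] xy(3) x1(2) by metis
  then show ?thesis using adj_proj_pt_if_dist_2[OF qA uy x1(1)] adj_sym unfolding x1_def y1_def by blast
qed

lemma proj_pt_image_line_outside_subspace:
  assumes A: "big_quad P L A" and Y: "subspace P L Y" "A \<subseteq> Y" and l: "l \<in> L" "l \<inter> Y = {}"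
  shows "proj_pt L A ` l \<in> L"
proof -
  obtain x y w where xyw: "l = {x, y, w}" "x \<noteq> y" "x \<noteq> w" "y \<noteq> w" using line_points[OF l(1)] .
  let ?\<pi> = "proj_pt L A"
  have adj: "adj L (?\<pi> x) (?\<pi> y)" "adj L (?\<pi> w) (?\<pi> x)" "adj L (?\<pi> w) (?\<pi> y)"
    using adj_proj_pt_line_outside_subspace[OF A Y l] xyw by auto
  obtain m where m: "m \<in> L" "?\<pi> x \<in> m" "?\<pi> y \<in> m" using adj_lineE[OF adj(1)] .
  have "?\<pi> w \<in> m" using in_line_if_adj_two_points[OF m adjD(3)[OF adj(1)] adj(2,3)] .
  then have "m = {?\<pi> x, ?\<pi> y, ?\<pi> w}" using line_eq_three_points m adj adjD(3) by metis
  with m(1) xyw(1) show ?thesis by simp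
qed

end

subsection \<open>Two disjoint big quads and a line outside their span\<close>

locale quad_pair_and_line = slim_near_hexagon +
  fixes A B Y l :: "'a set"
  assumes big_quad_A: "big_quad P L A" and big_quad_B: "big_quad P L B"
    and disjoint: "A \<inter> B = {}"
    and subspace_Y: "subspace P L Y" and A_subset: "A \<subseteq> Y" and B_subset: "B \<subseteq> Y"
    and line_l: "l \<in> L" and line_l_outside: "l \<inter> Y = {}"
begin

lemma swap: "quad_pair_and_line P L B A Y l"
  by (unfold_locales; use slim near_hexagon big_quad_A big_quad_B disjoint subspace_Y A_subset B_subset
      line_l line_l_outside in blast)

lemma quad_A: "quad P L A" and quad_B: "quad P L B"
  using big_quad_A big_quad_B by (simp_all add: big_quad_def)

lemma line_point_outside: "x \<in> l \<Longrightarrow> x \<in> P - Y"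
  using line_l line_l_outside line_subset by blast

lemma proj_line_point:
  assumes "x \<in> l"
  shows "proj_pt L A x \<in> A" "adj L x (proj_pt L A x)"
    and "\<And>q. q \<in> A \<Longrightarrow> adj L x q \<Longrightarrow> q = proj_pt L A x"
  using unique_neighbour_proj_pt[OF quad_subset[OF quad_A]
      unique_neighbour_outside_subspace[OF big_quad_A subspace_Y A_subset]]
    line_point_outside[OF assms] by blast+

lemma proj_quad_point:
  assumes "p \<in> B"
  shows "proj_pt L A p \<in> A" "adj L p (proj_pt L A p)"
    and "\<And>q. q \<in> A \<Longrightarrow> adj L p q \<Longrightarrow> q = proj_pt L A p"
  using unique_neighbour_proj_pt[OF quad_subset[OF quad_A]
      unique_neighbour_disjoint_big_quad[OF big_quad_A big_quad_B disjoint assms]] by blast+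

lemma dist_proj_pts:
  assumes "x \<in> l" shows "dist L (proj_pt L A x) (proj_pt L B x) = 2"
proof -
  have a: "proj_pt L A x \<in> A" "adj L x (proj_pt L A x)"
    using proj_line_point(1,2)[OF assms] .
  have b: "proj_pt L B x \<in> B" "adj L x (proj_pt L B x)"
    using quad_pair_and_line.proj_line_point(1,2)[OF swap assms] .
  have "proj_pt L A x \<noteq> proj_pt L B x" using a(1) b(1) disjoint by auto
  moreover have "x \<notin> Y" using line_point_outside[OF assms] by simp
  ultimately show ?thesis
    using dist_eq_2_if_adj_outside_subspace[OF subspace_Y _ _ _ _ a(2) b(2)] a(1) b(1)
      A_subset B_subset by (simp add: subset_iff)
qed

lemma adj_proj_proj:
  assumes "x \<in> l" shows "adj L (proj_pt L A x) (proj_pt L A (proj_pt L B x))"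
proof -
  have x2: "proj_pt L B x \<in> B" using quad_pair_and_line.proj_line_point(1)[OF swap assms] .
  have "proj_pt L A x \<in> P" "proj_pt L B x \<in> P"
    using proj_line_point(1)[OF assms] x2 quad_subset[OF quad_A] quad_subset[OF quad_B] by auto
  then have "dist L (proj_pt L B x) (proj_pt L A x) = 2"
    using dist_proj_pts[OF assms] dist_commute by simp
  with adj_proj_pt_if_dist_2[OF quad_A unique_neighbour_disjoint_big_quad[OF big_quad_A big_quad_B
      disjoint x2] proj_line_point(1)[OF assms]]
  show ?thesis by (simp add: adj_sym)
qed

lemma proj_line_point_adj:
  "\<lbrakk>x \<in> l; y \<in> l; x \<noteq> y\<rbrakk> \<Longrightarrow> adj L (proj_pt L A x) (proj_pt L A y)"
  using adj_proj_pt_line_outside_subspace[OF big_quad_A subspace_Y A_subset line_l line_l_outside] .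

lemma proj_image_line:
  assumes "x \<in> l" "y \<in> l" "w \<in> l" "x \<noteq> y" "x \<noteq> w" "y \<noteq> w"
  shows "proj_pt L A ` l = {proj_pt L A x, proj_pt L A y, proj_pt L A w}"
    and "proj_pt L A ` l \<in> L"
    and "adj L (proj_pt L A x) (proj_pt L A y)" "adj L (proj_pt L A x) (proj_pt L A w)"
    "adj L (proj_pt L A y) (proj_pt L A w)"
proof -
  show "proj_pt L A ` l = {proj_pt L A x, proj_pt L A y, proj_pt L A w}"
    using line_eq_three_points[OF line_l assms] by simp
  show "proj_pt L A ` l \<in> L"
    by (rule proj_pt_image_line_outside_subspace[OF big_quad_A subspace_Y A_subset line_l line_l_outside])
  show "adj L (proj_pt L A x) (proj_pt L A y)" "adj L (proj_pt L A x) (proj_pt L A w)"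
    "adj L (proj_pt L A y) (proj_pt L A w)"
    using proj_line_point_adj assms by auto
qed

lemma line_through_proj_eq_iff:
  assumes xyw: "x \<in> l" "y \<in> l" "w \<in> l" "x \<noteq> y" "x \<noteq> w" "y \<noteq> w"
    and c: "adj L (proj_pt L A x) c"
  shows "line_through L (proj_pt L A x) (proj_pt L A y) = line_through L (proj_pt L A x) c
    \<longleftrightarrow> c = proj_pt L A y \<or> c = proj_pt L A w"
proof -
  let ?m = "proj_pt L A ` l"
  note m = proj_image_line[OF xyw]
  have "line_through L (proj_pt L A x) (proj_pt L A y) = ?m"
    using line_through_eq[OF m(2) adjD(3)[OF m(3)]] m(1) by simp
  moreover obtain n where n: "n \<in> L" "proj_pt L A x \<in> n" "c \<in> n" using adj_lineE[OF c] .
  moreover have "line_through L (proj_pt L A x) c = n" using line_through_eq[OF n(1) adjD(3)[OF c] n(2,3)] .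
  moreover have "?m = n \<longleftrightarrow> c \<in> ?m"
    using line_unique[OF m(2) n(1) adjD(3)[OF c] _ _ n(2,3)] m(1) n(3) by auto
  ultimately show ?thesis using m(1) adjD(3)[OF c] by auto
qed

lemma third_proj:
  assumes "x \<in> l" "y \<in> l" "w \<in> l" "x \<noteq> y" "x \<noteq> w" "y \<noteq> w"
  shows "third L (proj_pt L A x) (proj_pt L A w) = proj_pt L A y"
proof -
  note m = proj_image_line[OF assms]
  show ?thesis
    using third_eq[OF m(2)] adjD(3)[OF m(3)] adjD(3)[OF m(4)] adjD(3)[OF m(5)] assms(1-3)
    by (metis image_eqI)
qed

lemma adj_proj_pt_of_adj_neighbour:
  assumes "u \<in> A" "q \<in> A" "adj L u q" "p \<in> B" "adj L p q"
  shows "adj L (proj_pt L B u) p"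
proof -
  have "\<not> adj L u p"
    using proj_quad_point(3)[OF assms(4)] assms(1,2,5) adjD(3)[OF assms(3)] adj_sym by metis
  moreover have "u \<noteq> p" using assms(1,4) disjoint by auto
  ultimately have "dist L u p = 2" using dist_eq_2I assms(3,5) adj_sym by blast
  moreover have "unique_neighbour L B u"
    using unique_neighbour_disjoint_big_quad[OF big_quad_B big_quad_A _ assms(1)] disjoint by auto
  ultimately show ?thesis using adj_proj_pt_if_dist_2[OF quad_B _ assms(4)] by blast
qed

lemma proj_proj_ne_proj:
  assumes xyw: "x \<in> l" "y \<in> l" "w \<in> l" "x \<noteq> y" "x \<noteq> w" "y \<noteq> w"
    and gate_eq: "proj_pt L A (proj_pt L B x) = proj_pt L A y"
  shows "proj_pt L B (proj_pt L A x) \<noteq> proj_pt L B y"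
proof
  interpret swapped: quad_pair_and_line P L B A Y l by (rule swap)
  define x1 y1 w1 x2 y2 w2 where "x1 = proj_pt L A x" and "y1 = proj_pt L A y"
    and "w1 = proj_pt L A w" and "x2 = proj_pt L B x" and "y2 = proj_pt L B y"
    and "w2 = proj_pt L B w"
  note pts = x1_def y1_def w1_def x2_def y2_def w2_def
  have A_pts: "x1 \<in> A" "y1 \<in> A" "w1 \<in> A" "adj L w w1"
    using proj_line_point(1,2) xyw unfolding pts by blast+
  have B_pts: "x2 \<in> B" "y2 \<in> B" "adj L w w2"
    using swapped.proj_line_point(1,2) xyw unfolding pts by blast+
  note A_line = proj_image_line[OF xyw, folded pts] and B_line = swapped.proj_image_line[OF xyw, folded pts]
  define b where "b = proj_pt L B w1"
  assume "proj_pt L B x1 = y2"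
  then have "adj L y2 x1" using swapped.proj_quad_point(2)[OF A_pts(1)] adj_sym by simp
  then have by2: "adj L b y2"
    using adj_proj_pt_of_adj_neighbour[OF A_pts(3,1) _ B_pts(2)] A_line(4) adj_sym unfolding b_def by blast
  have "adj L x2 y1" using proj_quad_point(2)[OF B_pts(1)] gate_eq unfolding pts by simp
  then have bx2: "adj L b x2"
    using adj_proj_pt_of_adj_neighbour[OF A_pts(3,2) _ B_pts(1)] A_line(5) adj_sym unfolding b_def by blast
  have "b \<in> proj_pt L B ` l"
    using in_line_if_adj_two_points[OF B_line(2) _ _ adjD(3)[OF B_line(3)] bx2 by2] B_line(1) by auto
  then have "b = w2" using B_line(1) adjD(3)[OF bx2] adjD(3)[OF by2] by auto
  moreover have "adj L w1 b" using swapped.proj_quad_point(2)[OF A_pts(3)] unfolding b_def .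
  ultimately have "w \<in> Y"
    using in_subspace_if_adj_two_points[OF subspace_Y _ _ _ A_pts(4) B_pts(3)]
      A_pts(3) B_line(1) A_subset B_subset swapped.proj_line_point(1)[OF xyw(3)] unfolding pts by auto
  then show False using line_point_outside xyw(3) by auto
qed

lemma dist_proj_proj_le_2:
  assumes dense: "dense P L" and xy: "x \<in> l" "y \<in> l" "x \<noteq> y"
    and gate_eq: "proj_pt L A (proj_pt L B x) = proj_pt L A y"
  shows "dist L y (proj_pt L B (proj_pt L A x)) \<le> 2"
proof -
  interpret swapped: quad_pair_and_line P L B A Y l by (rule swap)
  define x1 y1 x2 y2 a where "x1 = proj_pt L A x" and "y1 = proj_pt L A y"
    and "x2 = proj_pt L B x" and "y2 = proj_pt L B y" and "a = proj_pt L B x1"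
  note pts = x1_def y1_def x2_def y2_def a_def
  have x1: "x1 \<in> A" "adj L x x1" and y1: "y1 \<in> A" and x_uniq: "\<And>q. q \<in> A \<Longrightarrow> adj L x q \<Longrightarrow> q = x1"
    using proj_line_point xy unfolding pts by blast+
  have x2: "x2 \<in> B" "adj L x x2" and y_uniq: "\<And>q. q \<in> B \<Longrightarrow> adj L y q \<Longrightarrow> q = y2"
    using swapped.proj_line_point xy unfolding pts by blast+
  have x1y1: "adj L x1 y1" and x2y2: "adj L x2 y2"
    using proj_line_point_adj swapped.proj_line_point_adj xy unfolding pts by blast+
  have y1x2: "adj L y1 x2" using proj_quad_point(2)[OF x2(1)] gate_eq adj_sym unfolding pts by simp
  have xy_adj: "adj L x y" using adjI[OF line_l xy] .
  have YP: "x \<in> P - Y" "y \<in> P - Y" using line_point_outside xy by auto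
  have "\<not> adj L y x2" using y_uniq[OF x2(1)] adjD(3)[OF x2y2] by auto
  moreover have "y \<noteq> x2" using YP x2(1) B_subset by auto
  ultimately have yx2: "dist L y x2 = 2" using dist_eq_2I xy_adj x2(2) adj_sym by blast
  have "y \<in> P" "x2 \<in> P" using YP x2(1) quad_subset[OF quad_B] by auto
  with dense yx2 obtain R where R: "quad P L R" "y \<in> R" "x2 \<in> R" unfolding dense_def by blast
  have "x \<in> R" using quad_convex[OF R yx2] xy_adj x2(2) adj_sym by blast
  have "y1 \<in> R" using quad_convex[OF R yx2] proj_line_point(2)[OF xy(2)] y1x2 unfolding pts by blast
  have "\<not> adj L x y1" using x_uniq[OF y1] adjD(3)[OF x1y1] by auto
  moreover have "x \<noteq> y1" using YP y1 A_subset by auto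
  ultimately have "dist L x y1 = 2" using dist_eq_2I xy_adj proj_line_point(2)[OF xy(2)] unfolding pts by blast
  then have "x1 \<in> R" using quad_convex[OF R(1) \<open>x \<in> R\<close> \<open>y1 \<in> R\<close>] x1(2) x1y1 by blast
  moreover have "adj L x1 a" using swapped.proj_quad_point(2)[OF x1(1)] unfolding pts .
  moreover have "adj L a x2" using swapped.adj_proj_proj[OF xy(1)] adj_sym unfolding pts by blast
  moreover have "dist L x1 x2 = 2" using dist_proj_pts[OF xy(1)] unfolding pts .
  ultimately have "a \<in> R" using quad_convex[OF R(1) _ R(3)] by blast
  with R(1,2) show ?thesis using quad_dist_le_2 unfolding pts by blast
qed

lemma proj_proj_eq_proj:
  assumes dense: "dense P L" and xyw: "x \<in> l" "y \<in> l" "w \<in> l" "x \<noteq> y" "x \<noteq> w" "y \<noteq> w"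
    and gate_eq: "proj_pt L A (proj_pt L B x) = proj_pt L A y"
  shows "proj_pt L B (proj_pt L A x) = proj_pt L B w"
proof -
  interpret swapped: quad_pair_and_line P L B A Y l by (rule swap)
  define x2 y2 w2 a where "x2 = proj_pt L B x" and "y2 = proj_pt L B y" and "w2 = proj_pt L B w"
    and "a = proj_pt L B (proj_pt L A x)"
  note pts = x2_def y2_def w2_def a_def
  note B_line = swapped.proj_image_line[OF xyw, folded pts]
  have a: "a \<in> B" using swapped.proj_quad_point(1) proj_line_point(1)[OF xyw(1)] unfolding pts by blast
  have "a \<noteq> y2" using proj_proj_ne_proj[OF xyw gate_eq] unfolding pts .
  have y: "y \<in> P - Y" using line_point_outside xyw(2) by blast
  have uy: "unique_neighbour L B y"
    using unique_neighbour_outside_subspace[OF big_quad_B subspace_Y B_subset] y by blast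
  have "\<not> adj L y a" using swapped.proj_line_point(3)[OF xyw(2) a] \<open>a \<noteq> y2\<close> unfolding pts by blast
  moreover have "y \<noteq> a" using y a B_subset by auto
  moreover have "a \<in> P" using a quad_subset[OF quad_B] by blast
  ultimately have "dist L y a = 2"
    using dist_ge_2 dist_proj_proj_le_2[OF dense xyw(1,2,4) gate_eq] y unfolding pts by fastforce
  then have "adj L a y2" using adj_proj_pt_if_dist_2[OF quad_B uy a] adj_sym unfolding pts by blast
  moreover have "adj L a x2" using swapped.adj_proj_proj[OF xyw(1)] adj_sym unfolding pts by blast
  ultimately have "a \<in> proj_pt L B ` l"
    using in_line_if_adj_two_points[OF B_line(2) _ _ adjD(3)[OF B_line(3)]] B_line(1) by auto
  then show ?thesis using B_line(1) adjD(3)[OF \<open>adj L a x2\<close>] \<open>a \<noteq> y2\<close> unfolding pts by auto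
qed

end

theorem proposition2p4:
  fixes P :: "'a set" and L :: "'a set set" and Q1 Q2 :: "'a set" and l :: "'a set" and x y :: 'a
  assumes "slim_pls P L" and "near_hexagon P L" and "dense P L"
    and "big_quad P L Q1" and "big_quad P L Q2" and "Q1 \<inter> Q2 = {}"
    and "l \<in> L" and "l \<inter> generated_subspace P L (Q1 \<union> Q2) = {}"
    and "x \<in> l" and "y \<in> l" and "x \<noteq> y"
  shows "((line_through L (proj_pt L Q1 x) (proj_pt L Q1 y)
            = line_through L (proj_pt L Q1 x) (proj_pt L Q1 (proj_pt L Q2 x)))
         \<longleftrightarrow> (line_through L (proj_pt L Q2 x) (proj_pt L Q2 y)
            = line_through L (proj_pt L Q2 x) (proj_pt L Q2 (proj_pt L Q1 x))))
       \<and> (line_through L (proj_pt L Q1 x) (proj_pt L Q1 y)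
            = line_through L (proj_pt L Q1 x) (proj_pt L Q1 (proj_pt L Q2 x)) \<longrightarrow>
         (proj_pt L Q1 y, proj_pt L Q2 y)
            = (proj_pt L Q1 (proj_pt L Q2 x), third L (proj_pt L Q2 x) (proj_pt L Q2 (proj_pt L Q1 x)))
       \<or> (proj_pt L Q1 y, proj_pt L Q2 y)
            = (third L (proj_pt L Q1 x) (proj_pt L Q1 (proj_pt L Q2 x)), proj_pt L Q2 (proj_pt L Q1 x)))"
proof -
  interpret slim_near_hexagon P L using assms(1,2) by unfold_locales
  define Y where "Y = generated_subspace P L (Q1 \<union> Q2)"
  have "Q1 \<union> Q2 \<subseteq> P" using assms(4,5) quad_subset by (auto simp: big_quad_def)
  then have "subspace P L Y" unfolding Y_def by (rule subspace_generated_subspace)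
  moreover have "Q1 \<union> Q2 \<subseteq> Y" unfolding Y_def generated_subspace_def by blast
  ultimately interpret quad_pair_and_line P L Q1 Q2 Y l
    using assms(4-8) by unfold_locales (auto simp: Y_def)
  interpret swapped: quad_pair_and_line P L Q2 Q1 Y l by (rule swap)
  obtain w where "w \<in> l" "w \<noteq> x" "w \<noteq> y" using line_third_point[OF assms(7,9,10,11)] .
  with assms(9-11) have xyw: "x \<in> l" "y \<in> l" "w \<in> l" "x \<noteq> y" "x \<noteq> w" "y \<noteq> w"
    and xwy: "x \<in> l" "w \<in> l" "y \<in> l" "x \<noteq> w" "x \<noteq> y" "w \<noteq> y" by auto
  note eq = proj_proj_eq_proj[OF assms(3)] and eq' = swapped.proj_proj_eq_proj[OF assms(3)]
  have "proj_pt L Q1 (proj_pt L Q2 x) = proj_pt L Q1 y \<or> proj_pt L Q1 (proj_pt L Q2 x) = proj_pt L Q1 w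
    \<longleftrightarrow> proj_pt L Q2 (proj_pt L Q1 x) = proj_pt L Q2 y \<or> proj_pt L Q2 (proj_pt L Q1 x) = proj_pt L Q2 w"
    using eq[OF xyw] eq[OF xwy] eq'[OF xyw] eq'[OF xwy] by argo
  then show ?thesis
    unfolding line_through_proj_eq_iff[OF xyw adj_proj_proj[OF assms(9)]]
      swapped.line_through_proj_eq_iff[OF xyw swapped.adj_proj_proj[OF assms(9)]] prod.inject
    using eq[OF xyw] eq[OF xwy] third_proj[OF xyw] swapped.third_proj[OF xyw] by metis
qed

end
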